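(* Let $C>0$, let $l$ be a mostly horizontal inclined to the right line, and let $I$ be an image of width $w$. Then $N(I\cap s(l,C))\leqslant(2C\sqrt2+1)\,w$.
   Context: An image of width $w$ and height $h$ is identified with the set of integer points $(x,y)$, $x\in\{0,\dots,w-1\}$, $y\in\{0,\dots,h-1\}$. For a line $l$ and $C>0$, $s(l,C)=\{r\in\mathbb{R}^2\mid\rho(r,l)\leqslant C/2\}$, $\rho$ the Euclidean distance. A line is mostly horizontal inclined to the right if it has equation $y=ax+b$ with $0\leqslant a\leqslant1$. For $D\subseteq\mathbb{R}^2$, $N(D)=|\mathbb{Z}^2\cap D|$. *)

theory Defs
  imports "HOL-Analysis.Analysis"
begin

text \<open>The plane is modelled as real \<times> real, whose metric is the Euclidean one.\<close>

definition lattice :: "(real \<times> real) set" where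
  "lattice = {(of_int x, of_int y) | x y. True}"

definition image_pts :: "nat \<Rightarrow> nat \<Rightarrow> (real \<times> real) set" where
  "image_pts w h = {(of_int x, of_int y) | x y. 0 \<le> x \<and> x < int w \<and> 0 \<le> y \<and> y < int h}"

definition line_ab :: "real \<Rightarrow> real \<Rightarrow> (real \<times> real) set" where
  "line_ab a b = {(x, y). y = a * x + b}"

definition strip :: "(real \<times> real) set \<Rightarrow> real \<Rightarrow> (real \<times> real) set" where
  "strip l C = {r. infdist r l \<le> C / 2}"

definition N :: "(real \<times> real) set \<Rightarrow> nat" where
  "N D = card (lattice \<inter> D)"

end

theory Submission
  imports Defs
begin

text \<open>Since the slope is at most 1, the vertical distance from a point to the line is at most
  \<open>\<surd>2\<close> times its Euclidean distance. Hence in every column \<open>x = const\<close> of the image the lattice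
  points of the strip lie in a vertical interval of length \<open>C\<surd>2\<close>, which contains at most
  \<open>C\<surd>2 + 1\<close> integers; summing over the \<open>w\<close> columns gives even \<open>(C\<surd>2 + 1) w\<close>.\<close>

lemma abs_plus_abs_le_sqrt2_norm: "\<bar>p\<bar> + \<bar>q\<bar> \<le> sqrt 2 * sqrt (p\<^sup>2 + q\<^sup>2 :: real)"
proof -
  have "(\<bar>p\<bar> + \<bar>q\<bar>)\<^sup>2 \<le> 2 * (p\<^sup>2 + q\<^sup>2)"
    using zero_le_power2[of "\<bar>p\<bar> - \<bar>q\<bar>"] by (simp add: power2_eq_square algebra_simps)
  then have "\<bar>p\<bar> + \<bar>q\<bar> \<le> sqrt (2 * (p\<^sup>2 + q\<^sup>2))"
    by (simp add: real_le_rsqrt)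
  then show ?thesis
    by (simp add: real_sqrt_mult[symmetric] algebra_simps)
qed

lemma vertical_dist_le_sqrt2_infdist_line:
  assumes "\<bar>a\<bar> \<le> 1"
  shows "\<bar>y - a * x - b\<bar> \<le> sqrt 2 * infdist (x, y) (line_ab a b)"
proof -
  have ne: "line_ab a b \<noteq> {}"
    unfolding line_ab_def by auto
  have "\<bar>y - a * x - b\<bar> / sqrt 2 \<le> (INF p\<in>line_ab a b. dist (x, y) p)"
  proof (rule cINF_greatest[OF ne])
    fix p assume "p \<in> line_ab a b"
    then obtain u v where p: "p = (u, v)" "v = a * u + b"
      unfolding line_ab_def by auto
    have "\<bar>y - a * x - b\<bar> = \<bar>(y - v) + a * (u - x)\<bar>"
      using p by (simp add: algebra_simps)
    also have "\<dots> \<le> \<bar>y - v\<bar> + \<bar>a\<bar> * \<bar>u - x\<bar>"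
      using abs_triangle_ineq[of "y - v" "a * (u - x)"] by (simp add: abs_mult)
    also have "\<dots> \<le> \<bar>x - u\<bar> + \<bar>y - v\<bar>"
      using mult_right_mono[OF assms abs_ge_zero[of "u - x"]] by (simp add: abs_minus_commute)
    also have "\<dots> \<le> sqrt 2 * dist (x, y) p"
      using abs_plus_abs_le_sqrt2_norm[of "x - u" "y - v"]
      by (simp add: p dist_Pair_Pair dist_real_def)
    finally show "\<bar>y - a * x - b\<bar> / sqrt 2 \<le> dist (x, y) p"
      by (simp add: divide_simps mult.commute)
  qed
  then show ?thesis
    using infdist_notempty[OF ne] by (simp add: divide_simps mult.commute)
qed

lemma card_int_interval_le:
  assumes "K \<ge> 0"
  shows "real (card {\<lceil>c - K\<rceil>..\<lfloor>c + K\<rfloor>}) \<le> 2 * K + 1"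
proof (cases "\<lceil>c - K\<rceil> \<le> \<lfloor>c + K\<rfloor>")
  case True
  then have "real (card {\<lceil>c - K\<rceil>..\<lfloor>c + K\<rfloor>}) = of_int (\<lfloor>c + K\<rfloor> - \<lceil>c - K\<rceil> + 1)"
    by simp
  also have "\<dots> \<le> 2 * K + 1"
    using of_int_floor_le[of "c + K"] le_of_int_ceiling[of "c - K"] by linarith
  finally show ?thesis .
next
  case False
  with assms show ?thesis by simp
qed

definition strip_column :: "real \<Rightarrow> real \<Rightarrow> real \<Rightarrow> int \<Rightarrow> (real \<times> real) set" where
  "strip_column a b K x =
     (\<lambda>y. (of_int x, of_int y)) ` {\<lceil>a * x + b - K\<rceil>..\<lfloor>a * x + b + K\<rfloor>}"

lemma card_strip_column_le:
  assumes "K \<ge> 0"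
  shows "real (card (strip_column a b K x)) \<le> 2 * K + 1"
proof -
  have "card (strip_column a b K x) \<le> card {\<lceil>a * x + b - K\<rceil>..\<lfloor>a * x + b + K\<rfloor>}"
    unfolding strip_column_def by (rule card_image_le) simp
  with card_int_interval_le[OF assms, of "a * x + b"] show ?thesis
    by linarith
qed

lemma lattice_image_strip_subset_columns:
  assumes "\<bar>a\<bar> \<le> 1"
  shows "lattice \<inter> (image_pts w h \<inter> strip (line_ab a b) C)
           \<subseteq> (\<Union>x\<in>{0..<int w}. strip_column a b (C * sqrt 2 / 2) x)"
proof
  fix p assume p: "p \<in> lattice \<inter> (image_pts w h \<inter> strip (line_ab a b) C)"
  then obtain x y :: int where xy: "p = (of_int x, of_int y)" "0 \<le> x" "x < int w"
    unfolding image_pts_def by auto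
  have "\<bar>y - a * x - b\<bar> \<le> sqrt 2 * infdist p (line_ab a b)"
    using vertical_dist_le_sqrt2_infdist_line[OF assms] xy(1) by simp
  also have "\<dots> \<le> sqrt 2 * (C / 2)"
    using p unfolding strip_def by (intro mult_left_mono) auto
  finally have "\<bar>y - a * x - b\<bar> \<le> C * sqrt 2 / 2"
    by (simp add: mult.commute)
  then have "y \<in> {\<lceil>a * x + b - C * sqrt 2 / 2\<rceil>..\<lfloor>a * x + b + C * sqrt 2 / 2\<rfloor>}"
    by (simp add: ceiling_le_iff le_floor_iff abs_le_iff; linarith)
  then show "p \<in> (\<Union>x\<in>{0..<int w}. strip_column a b (C * sqrt 2 / 2) x)"
    using xy unfolding strip_column_def by (intro UN_I[of x]) auto
qed

theorem proposition13:
  fixes C a b :: real and w h :: nat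
  assumes "C > 0" and "0 \<le> a" and "a \<le> 1"
  shows "real (N (image_pts w h \<inter> strip (line_ab a b) C)) \<le> (2 * C * sqrt 2 + 1) * real w"
proof -
  define K where "K = C * sqrt 2 / 2"
  have K: "K \<ge> 0"
    using assms(1) by (simp add: K_def)
  have "N (image_pts w h \<inter> strip (line_ab a b) C) \<le> card (\<Union>x\<in>{0..<int w}. strip_column a b K x)"
    unfolding N_def K_def
    using lattice_image_strip_subset_columns assms(2,3)
    by (intro card_mono) (auto simp: strip_column_def)
  also have "\<dots> \<le> (\<Sum>x\<in>{0..<int w}. card (strip_column a b K x))"
    by (rule card_UN_le) simp
  finally have "real (N (image_pts w h \<inter> strip (line_ab a b) C))
                  \<le> (\<Sum>x\<in>{0..<int w}. real (card (strip_column a b K x)))"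
    by (metis of_nat_le_iff of_nat_sum)
  also have "\<dots> \<le> (\<Sum>x\<in>{0..<int w}. 2 * K + 1)"
    by (intro sum_mono card_strip_column_le K)
  also have "\<dots> = (C * sqrt 2 + 1) * real w"
    by (simp add: K_def)
  also have "\<dots> \<le> (2 * C * sqrt 2 + 1) * real w"
    using assms(1) by (intro mult_right_mono) auto
  finally show ?thesis .
qed

end
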